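(* Let $\mathcal Y$ be a finite set, $L:\mathcal Y\times\mathcal A\to\mathbb R$ a loss function, and $P_Y,Q_Y$ distributions on $\mathcal Y$. (a) If $D_{\chi^2}(P_Y\|Q_Y)\le\beta^2$, then $D_L(P_Y\|Q_Y)=O(\beta)$. (b) If, in addition, $H_L(Y)$ is twice differentiable in $P_Y$, then $D_L(P_Y\|Q_Y)=O(\beta^2)$.
   Context: Minima are assumed attained. A Bayes action $a_P$ of a distribution $P$ on $\mathcal Y$ is a minimizer of $a\mapsto\mathbb E_{Y\sim P}[L(Y,a)]$; $H_L(Y)=\min_{a\in\mathcal A}\mathbb E_{Y\sim P_Y}[L(Y,a)]$, viewed as a function of the probability vector $P_Y$. The $L$-divergence is $D_L(P\|Q)=\mathbb E_{Y\sim P}[L(Y,a_Q)]-\mathbb E_{Y\sim P}[L(Y,a_P)]\ge0$. Neyman's $\chi^2$-divergence is $D_{\chi^2}(P\|Q)=\sum_y\frac{(P(y)-Q(y))^2}{Q(y)}$ ($0^2/0=0$). Big-O is as $\beta\to0$ with $Q_Y$ and $L$ fixed. *)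

theory Defs
  imports "HOL-Analysis.Analysis"
begin

text \<open>Finite outcome space = finite type 'y; action space = type 'a.
  Distributions on 'y are probability vectors in real^'y.\<close>

definition prob_simplex :: "(real ^ 'y::finite) set" where
  "prob_simplex = {p. (\<forall>y. 0 \<le> p $ y) \<and> (\<Sum>y\<in>UNIV. p $ y) = 1}"

definition exp_loss :: "('y::finite \<Rightarrow> 'a \<Rightarrow> real) \<Rightarrow> real ^ 'y \<Rightarrow> 'a \<Rightarrow> real" where
  "exp_loss L p a = (\<Sum>y\<in>UNIV. p $ y * L y a)"

definition bayes_action :: "('y::finite \<Rightarrow> 'a \<Rightarrow> real) \<Rightarrow> real ^ 'y \<Rightarrow> 'a \<Rightarrow> bool" where
  "bayes_action L p a \<longleftrightarrow> (\<forall>b. exp_loss L p a \<le> exp_loss L p b)"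

text \<open>Generalized entropy H_L as a function of the probability vector (min is attained by assumption).\<close>
definition H_L :: "('y::finite \<Rightarrow> 'a \<Rightarrow> real) \<Rightarrow> real ^ 'y \<Rightarrow> real" where
  "H_L L p = (INF a. exp_loss L p a)"

definition L_div :: "('y::finite \<Rightarrow> 'a \<Rightarrow> real) \<Rightarrow> real ^ 'y \<Rightarrow> 'a \<Rightarrow> 'a \<Rightarrow> real" where
  "L_div L p aP aQ = exp_loss L p aQ - exp_loss L p aP"

text \<open>Neyman chi^2 divergence; +infinity if P(y)>0 = Q(y) for some y (0^2/0 = 0).\<close>
definition chi2_div :: "real ^ 'y::finite \<Rightarrow> real ^ 'y \<Rightarrow> ereal" where
  "chi2_div p q = (if \<exists>y. q $ y = 0 \<and> p $ y \<noteq> 0 then \<infinity>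
      else ereal (\<Sum>y\<in>{y. q $ y \<noteq> 0}. (p $ y - q $ y)^2 / q $ y))"

definition twice_diff_on_simplex :: "(real ^ 'y::finite \<Rightarrow> real) \<Rightarrow> bool" where
  "twice_diff_on_simplex f \<longleftrightarrow>
     (\<exists>f' :: (real ^ 'y) \<Rightarrow> ((real ^ 'y) \<Rightarrow>\<^sub>L real).
     \<exists>f'' :: (real ^ 'y) \<Rightarrow> ((real ^ 'y) \<Rightarrow> ((real ^ 'y) \<Rightarrow>\<^sub>L real)).
       \<forall>p\<in>prob_simplex.
         (f has_derivative blinfun_apply (f' p)) (at p within prob_simplex) \<and>
         (f' has_derivative f'' p) (at p within prob_simplex))"

end

theory Submission
  imports Defs
begin

text \<open>The \<open>\<chi>\<^sup>2\<close>-bound moves each coordinate by at most \<open>\<beta> sqrt (Q y)\<close>, hence by at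
  most \<open>\<beta> / sqrt m\<close> times \<open>Q y\<close>, where m is the smallest nonzero mass of Q.

  (a) Therefore \<open>P = (1 - t) Q + t R\<close> for a probability vector R and \<open>t = \<beta> / sqrt m\<close>.
  Optimality of aQ under Q leaves \<open>D\<^sub>L(P\<parallel>Q) \<le> t (E\<^sub>R L(aQ) - E\<^sub>R L(aP))\<close>, and this
  bracket is bounded because L is bounded below (a Bayes action for a point mass y minimises
  \<open>L y\<close>).

  (b) The reflection \<open>2Q - P\<close> is a probability vector as well, and comparing P with it gives
  \<open>D\<^sub>L(P\<parallel>Q) \<le> 2 H\<^sub>L(Q) - H\<^sub>L(P) - H\<^sub>L(2Q - P)\<close>, a second difference of \<open>H\<^sub>L\<close>.
  Since the derivative of \<open>H\<^sub>L\<close> is differentiable at Q, it is Lipschitz at Q, so both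
  first-order Taylor remainders, and hence the second difference, are \<open>O(\<parallel>P - Q\<parallel>\<^sup>2) = O(\<beta>\<^sup>2)\<close>.\<close>

lemma prob_simplex_nonneg: "p \<in> prob_simplex \<Longrightarrow> 0 \<le> p $ y"
  unfolding prob_simplex_def by blast

lemma prob_simplex_sum: "p \<in> prob_simplex \<Longrightarrow> (\<Sum>y\<in>UNIV. p $ y) = 1"
  unfolding prob_simplex_def by blast

lemma prob_simplex_le_one:
  assumes "p \<in> prob_simplex"
  shows "p $ y \<le> 1"
proof -
  have "p $ y \<le> (\<Sum>z\<in>UNIV. p $ z)"
    using assms by (intro member_le_sum) (auto simp: prob_simplex_nonneg)
  with assms show ?thesis by (simp add: prob_simplex_sum)
qed

lemma convex_prob_simplex: "convex prob_simplex"
  unfolding convex_def prob_simplex_def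
  by (auto simp: sum.distrib sum_distrib_left[symmetric])

lemma axis_in_prob_simplex: "axis y 1 \<in> prob_simplex"
  unfolding prob_simplex_def by (simp add: axis_def)

lemma abs_expectation_le_sum_abs:
  assumes "p \<in> prob_simplex"
  shows "\<bar>\<Sum>y\<in>UNIV. p $ y * f y\<bar> \<le> (\<Sum>y\<in>UNIV. \<bar>f y\<bar>)"
proof -
  have "\<bar>\<Sum>y\<in>UNIV. p $ y * f y\<bar> \<le> (\<Sum>y\<in>UNIV. p $ y * \<bar>f y\<bar>)"
    using assms by (auto intro: order.trans[OF sum_abs] simp: abs_mult prob_simplex_nonneg)
  also have "\<dots> \<le> (\<Sum>y\<in>UNIV. \<bar>f y\<bar>)"
    using assms by (intro sum_mono mult_left_le_one_le) (auto simp: prob_simplex_nonneg prob_simplex_le_one)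
  finally show ?thesis .
qed

lemma nonzero_entries_bounded_away_from_zero:
  fixes q :: "real ^ 'y::finite"
  obtains m where "0 < m" "\<And>y. q $ y \<noteq> 0 \<Longrightarrow> m \<le> \<bar>q $ y\<bar>"
proof
  let ?S = "insert 1 {\<bar>q $ y\<bar> |y. q $ y \<noteq> 0}"
  have "finite ?S" by simp
  then show "0 < Min ?S" by auto
  show "Min ?S \<le> \<bar>q $ y\<bar>" if "q $ y \<noteq> 0" for y
    using that \<open>finite ?S\<close> by (intro Min_le) auto
qed

lemma exp_loss_add: "exp_loss L (p + q) a = exp_loss L p a + exp_loss L q a"
  unfolding exp_loss_def by (simp add: sum.distrib algebra_simps)

lemma exp_loss_diff: "exp_loss L (p - q) a = exp_loss L p a - exp_loss L q a"
  unfolding exp_loss_def by (simp add: sum_subtractf algebra_simps)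

lemma exp_loss_scaleR: "exp_loss L (c *\<^sub>R p) a = c * exp_loss L p a"
  unfolding exp_loss_def by (simp add: sum_distrib_left algebra_simps)

lemma exp_loss_axis: "exp_loss L (axis y 1) a = L y a"
  unfolding exp_loss_def axis_def
  by (simp add: if_distrib[of "\<lambda>c. c * _"] cong: if_cong)

lemma H_L_eq_exp_loss: "bayes_action L p a \<Longrightarrow> H_L L p = exp_loss L p a"
  unfolding H_L_def bayes_action_def by (rule cInf_eq_minimum) auto

lemma L_div_nonneg: "bayes_action L p aP \<Longrightarrow> 0 \<le> L_div L p aP aQ"
  unfolding L_div_def bayes_action_def by simp

lemma loss_bounded_below:
  assumes "\<forall>p\<in>prob_simplex. \<exists>a. bayes_action L p a"
  obtains B where "\<And>y a. B y \<le> L y a"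
proof -
  have "\<exists>c. \<forall>a. c \<le> L y a" for y
  proof -
    obtain b where "bayes_action L (axis y 1) b"
      using assms axis_in_prob_simplex by blast
    then have "\<forall>a. L y b \<le> L y a"
      unfolding bayes_action_def exp_loss_axis .
    then show ?thesis by blast
  qed
  then show ?thesis using that by metis
qed

lemma chi2_div_le_imp_sq_diff_le:
  assumes "chi2_div p q \<le> ereal c" "q \<in> prob_simplex"
  shows "(p $ y - q $ y)^2 \<le> c * q $ y"
proof -
  have support: "\<not> (\<exists>y. q $ y = 0 \<and> p $ y \<noteq> 0)"
    using assms(1) unfolding chi2_div_def by (auto split: if_split_asm)
  then have sum_le: "(\<Sum>y\<in>{y. q $ y \<noteq> 0}. (p $ y - q $ y)^2 / q $ y) \<le> c"
    using assms(1) unfolding chi2_div_def by (simp only: if_False ereal_less_eq(3))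
  show ?thesis
  proof (cases "q $ y = 0")
    case True
    then show ?thesis using support by simp
  next
    case False
    then have pos: "0 < q $ y"
      using prob_simplex_nonneg[OF assms(2)] by (simp add: order_less_le)
    have "(p $ y - q $ y)^2 / q $ y \<le> (\<Sum>y\<in>{y. q $ y \<noteq> 0}. (p $ y - q $ y)^2 / q $ y)"
      using False prob_simplex_nonneg[OF assms(2)] by (intro member_le_sum) auto
    also have "\<dots> \<le> c" by (rule sum_le)
    finally show ?thesis using pos by (simp add: divide_le_eq)
  qed
qed

lemma chi2_div_le_imp_norm_le:
  assumes "chi2_div p q \<le> ereal (\<beta>^2)" "q \<in> prob_simplex" "0 \<le> \<beta>"
  shows "norm (p - q) \<le> \<beta>"
proof (rule power2_le_imp_le[OF _ assms(3)])
  have "(norm (p - q))^2 = (\<Sum>y\<in>UNIV. (p $ y - q $ y)^2)"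
    unfolding power2_norm_eq_inner inner_vec_def by (simp add: power2_eq_square)
  also have "\<dots> \<le> (\<Sum>y\<in>UNIV. \<beta>^2 * q $ y)"
    using chi2_div_le_imp_sq_diff_le[OF assms(1,2)] by (intro sum_mono)
  also have "\<dots> = \<beta>^2"
    using assms(2) by (simp add: sum_distrib_left[symmetric] prob_simplex_sum)
  finally show "(norm (p - q))^2 \<le> \<beta>^2" .
qed

text \<open>The hypothesis on c says \<open>\<bar>c\<bar> \<beta> sqrt (q y) \<le> q y\<close>, so the step \<open>c (p - q)\<close> cannot
  make a coordinate negative.\<close>

lemma chi2_line_point_in_prob_simplex:
  assumes chi2: "chi2_div p q \<le> ereal (\<beta>^2)"
    and p: "p \<in> prob_simplex" and q: "q \<in> prob_simplex"
    and c: "\<And>y. q $ y \<noteq> 0 \<Longrightarrow> (c * \<beta>)^2 \<le> q $ y"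
  shows "q + c *\<^sub>R (p - q) \<in> prob_simplex"
proof -
  have "0 \<le> q $ y + c * (p $ y - q $ y)" for y
  proof (cases "q $ y = 0")
    case True
    then show ?thesis
      using chi2_div_le_imp_sq_diff_le[OF chi2 q, of y] by simp
  next
    case False
    have "(c * (p $ y - q $ y))^2 \<le> (c * \<beta>)^2 * q $ y"
      using chi2_div_le_imp_sq_diff_le[OF chi2 q, of y]
      by (simp add: power_mult_distrib mult.assoc mult_left_mono)
    also have "\<dots> \<le> (q $ y)^2"
      using c[OF False] prob_simplex_nonneg[OF q]
      by (simp add: power2_eq_square mult_right_mono)
    finally have "\<bar>c * (p $ y - q $ y)\<bar> \<le> q $ y"
      using prob_simplex_nonneg[OF q, of y] by (metis abs_le_square_iff abs_of_nonneg)
    then show ?thesis by linarith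
  qed
  moreover have "(\<Sum>y\<in>UNIV. q $ y + c * (p $ y - q $ y)) = 1"
    using p q by (simp add: sum.distrib sum_subtractf sum_distrib_left[symmetric] prob_simplex_sum)
  ultimately show ?thesis unfolding prob_simplex_def by simp
qed

lemma L_div_mixture_le:
  assumes "bayes_action L q aQ" "0 \<le> t" "t \<le> 1"
  shows "L_div L ((1 - t) *\<^sub>R q + t *\<^sub>R r) aP aQ \<le> t * (exp_loss L r aQ - exp_loss L r aP)"
proof -
  have "(1 - t) * (exp_loss L q aQ - exp_loss L q aP) \<le> 0"
    using assms unfolding bayes_action_def by (intro mult_nonneg_nonpos) auto
  then show ?thesis
    unfolding L_div_def exp_loss_add exp_loss_scaleR by (simp add: algebra_simps)
qed

lemma L_div_chi2_linear_bound:
  fixes L :: "'y::finite \<Rightarrow> 'a \<Rightarrow> real"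
  assumes attained: "\<forall>p\<in>prob_simplex. \<exists>a. bayes_action L p a"
    and Q: "Q \<in> prob_simplex" and aQ: "bayes_action L Q aQ"
  obtains \<delta> C where "0 < \<delta>"
    "\<And>\<beta> P aP. 0 < \<beta> \<Longrightarrow> \<beta> < \<delta> \<Longrightarrow> P \<in> prob_simplex \<Longrightarrow> bayes_action L P aP \<Longrightarrow>
       chi2_div P Q \<le> ereal (\<beta>^2) \<Longrightarrow> \<bar>L_div L P aP aQ\<bar> \<le> C * \<beta>"
proof -
  obtain B where B: "\<And>y a. B y \<le> L y a"
    using loss_bounded_below[OF attained] by blast
  obtain m where m: "0 < m" "\<And>y. Q $ y \<noteq> 0 \<Longrightarrow> m \<le> \<bar>Q $ y\<bar>"
    using nonzero_entries_bounded_away_from_zero by blast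
  define s where "s = sqrt m"
  define M where "M = (\<Sum>y\<in>UNIV. \<bar>L y aQ\<bar>) + (\<Sum>y\<in>UNIV. \<bar>B y\<bar>)"
  have s: "0 < s" "s^2 = m" using m(1) by (auto simp: s_def)
  show thesis
  proof
    show "0 < s" by (fact s(1))
    fix \<beta> P aP
    assume \<beta>: "0 < \<beta>" "\<beta> < s" and P: "P \<in> prob_simplex"
      and aP: "bayes_action L P aP" and chi2: "chi2_div P Q \<le> ereal (\<beta>^2)"
    define t where "t = \<beta> / s"
    define R where "R = Q + (s / \<beta>) *\<^sub>R (P - Q)"
    have t: "0 < t" "t \<le> 1" using \<beta> s by (auto simp: t_def)
    have R: "R \<in> prob_simplex"
      unfolding R_def using \<beta> s m Q
      by (intro chi2_line_point_in_prob_simplex[OF chi2 P Q])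
         (auto simp: power_mult_distrib power_divide prob_simplex_nonneg)
    have "P = (1 - t) *\<^sub>R Q + t *\<^sub>R R"
      using \<beta> s by (simp add: R_def t_def algebra_simps)
    then have "L_div L P aP aQ \<le> t * (exp_loss L R aQ - exp_loss L R aP)"
      using L_div_mixture_le[OF aQ] t by simp
    also have "\<dots> \<le> t * M"
    proof -
      have "exp_loss L R aQ \<le> (\<Sum>y\<in>UNIV. \<bar>L y aQ\<bar>)"
        using abs_expectation_le_sum_abs[OF R, of "\<lambda>y. L y aQ"] unfolding exp_loss_def by linarith
      moreover have "(\<Sum>y\<in>UNIV. R $ y * B y) \<le> exp_loss L R aP"
        unfolding exp_loss_def using B R by (intro sum_mono mult_left_mono) (auto simp: prob_simplex_nonneg)
      moreover have "- (\<Sum>y\<in>UNIV. \<bar>B y\<bar>) \<le> (\<Sum>y\<in>UNIV. R $ y * B y)"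
        using abs_expectation_le_sum_abs[OF R, of B] by linarith
      ultimately show ?thesis
        unfolding M_def using t by (intro mult_left_mono) auto
    qed
    also have "\<dots> = M / s * \<beta>" by (simp add: t_def)
    finally show "\<bar>L_div L P aP aQ\<bar> \<le> M / s * \<beta>"
      using L_div_nonneg[OF aP] by simp
  qed
qed

lemma has_derivative_imp_Lipschitz_at:
  assumes "(g has_derivative g') (at x within S)"
  obtains K r where "0 \<le> K" "0 < r"
    "\<And>y. y \<in> S \<Longrightarrow> norm (y - x) < r \<Longrightarrow> norm (g y - g x) \<le> K * norm (y - x)"
proof -
  have lin: "bounded_linear g'"
    and "\<forall>e>0. \<exists>d>0. \<forall>y\<in>S. norm (y - x) < d \<longrightarrow> norm (g y - g x - g' (y - x)) \<le> e * norm (y - x)"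
    using assms unfolding has_derivative_within_alt by blast+
  then obtain r where r: "0 < r"
    and rem: "\<And>y. y \<in> S \<Longrightarrow> norm (y - x) < r \<Longrightarrow> norm (g y - g x - g' (y - x)) \<le> 1 * norm (y - x)"
    using zero_less_one by blast
  obtain K where K: "0 < K" "\<And>z. norm (g' z) \<le> norm z * K"
    using bounded_linear.pos_bounded[OF lin] by blast
  show thesis
  proof
    show "0 \<le> 1 + K" "0 < r" using K r by simp_all
    fix y assume "y \<in> S" "norm (y - x) < r"
    have "norm (g y - g x) \<le> norm (g y - g x - g' (y - x)) + norm (g' (y - x))"
      using norm_triangle_ineq[of "g y - g x - g' (y - x)" "g' (y - x)"] by simp
    also have "\<dots> \<le> 1 * norm (y - x) + norm (y - x) * K"
      using rem[OF \<open>y \<in> S\<close> \<open>norm (y - x) < r\<close>] K(2) by (rule add_mono)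
    finally show "norm (g y - g x) \<le> (1 + K) * norm (y - x)" by (simp add: algebra_simps)
  qed
qed

lemma first_order_remainder_le:
  fixes f :: "'a::real_normed_vector \<Rightarrow> 'b::real_normed_vector"
  assumes "convex S" "x \<in> S" "y \<in> S"
    and deriv: "\<And>p. p \<in> S \<Longrightarrow> (f has_derivative blinfun_apply (f' p)) (at p within S)"
    and Lipschitz: "\<And>p. p \<in> closed_segment x y \<Longrightarrow> norm (f' p - f' x) \<le> K * norm (p - x)"
    and "0 \<le> K"
  shows "norm (f y - f x - f' x (y - x)) \<le> K * (norm (y - x))^2"
proof -
  have segment: "closed_segment x y \<subseteq> S"
    using assms(1-3) by (rule closed_segment_subset[rotated 2])
  have "norm (f y - f x - f' x (y - x)) \<le> norm (y - x) * (K * norm (y - x))"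
  proof (rule differentiable_bound_linearization[where S = "closed_segment x y"])
    show "x + t *\<^sub>R (y - x) \<in> closed_segment x y" if "t \<in> {0..1}" for t
      using that unfolding in_segment by (auto intro!: exI[of _ t] simp: algebra_simps)
    show "(f has_derivative blinfun_apply (f' p)) (at p within closed_segment x y)"
      if "p \<in> closed_segment x y" for p
      using deriv segment that by (blast intro: has_derivative_subset)
    show "onorm (blinfun_apply (f' p) - blinfun_apply (f' x)) \<le> K * norm (y - x)"
      if "p \<in> closed_segment x y" for p
    proof -
      have "onorm (blinfun_apply (f' p) - blinfun_apply (f' x)) = norm (f' p - f' x)"
        by (simp add: norm_blinfun.rep_eq minus_blinfun.rep_eq fun_diff_def)
      also have "\<dots> \<le> K * norm (p - x)" using Lipschitz[OF that] .
      also have "\<dots> \<le> K * norm (y - x)"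
        using segment_bound1[OF that] \<open>0 \<le> K\<close> by (rule mult_left_mono)
      finally show ?thesis .
    qed
  qed simp
  then show ?thesis by (simp add: power2_eq_square mult_ac)
qed

lemma L_div_le_second_difference:
  assumes aP: "bayes_action L p aP" and aQ: "bayes_action L q aQ"
    and a': "bayes_action L (q - (p - q)) a'"
  shows "L_div L p aP aQ \<le> 2 * H_L L q - H_L L p - H_L L (q - (p - q))"
proof -
  have "exp_loss L (q - (p - q)) a' \<le> exp_loss L (q - (p - q)) aQ"
    using a' unfolding bayes_action_def by blast
  then show ?thesis
    unfolding L_div_def H_L_eq_exp_loss[OF aP] H_L_eq_exp_loss[OF aQ] H_L_eq_exp_loss[OF a'] exp_loss_diff
    by linarith
qed

lemma second_difference_le:
  fixes f :: "'a::real_normed_vector \<Rightarrow> real"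
  assumes S: "convex S" "x \<in> S" "x + v \<in> S" "x - v \<in> S"
    and deriv: "\<And>p. p \<in> S \<Longrightarrow> (f has_derivative blinfun_apply (f' p)) (at p within S)"
    and Lipschitz: "\<And>p. p \<in> S \<Longrightarrow> norm (p - x) \<le> norm v \<Longrightarrow> norm (f' p - f' x) \<le> K * norm (p - x)"
    and "0 \<le> K"
  shows "\<bar>2 * f x - f (x + v) - f (x - v)\<bar> \<le> 2 * K * (norm v)^2"
proof -
  have remainder: "\<bar>f y - f x - f' x (y - x)\<bar> \<le> K * (norm v)^2"
    if "y \<in> S" "norm (y - x) = norm v" for y
  proof -
    have "\<bar>f y - f x - f' x (y - x)\<bar> \<le> K * (norm (y - x))^2"
    proof (rule first_order_remainder_le[OF S(1,2) that(1) deriv _ \<open>0 \<le> K\<close>, simplified])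
      fix p assume p: "p \<in> closed_segment x y"
      then show "norm (f' p - f' x) \<le> K * norm (p - x)"
        using closed_segment_subset[OF S(2) that(1) S(1)] segment_bound1[OF p] that(2)
        by (intro Lipschitz) auto
    qed
    with that(2) show ?thesis by simp
  qed
  have "\<bar>f (x + v) - f x - f' x v\<bar> \<le> K * (norm v)^2"
    using remainder[OF S(3)] by simp
  moreover have "\<bar>f (x - v) - f x + f' x v\<bar> \<le> K * (norm v)^2"
    using remainder[OF S(4)] by (simp add: blinfun.minus_right)
  ultimately show ?thesis by linarith
qed

lemma L_div_chi2_quadratic_bound:
  fixes L :: "'y::finite \<Rightarrow> 'a \<Rightarrow> real"
  assumes attained: "\<forall>p\<in>prob_simplex. \<exists>a. bayes_action L p a"
    and Q: "Q \<in> prob_simplex" and aQ: "bayes_action L Q aQ"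
    and twice: "twice_diff_on_simplex (H_L L)"
  obtains \<delta> C where "0 < \<delta>"
    "\<And>\<beta> P aP. 0 < \<beta> \<Longrightarrow> \<beta> < \<delta> \<Longrightarrow> P \<in> prob_simplex \<Longrightarrow> bayes_action L P aP \<Longrightarrow>
       chi2_div P Q \<le> ereal (\<beta>^2) \<Longrightarrow> \<bar>L_div L P aP aQ\<bar> \<le> C * \<beta>^2"
proof -
  obtain H' :: "(real ^ 'y) \<Rightarrow> ((real ^ 'y) \<Rightarrow>\<^sub>L real)" and H'' where
    H': "\<And>p. p \<in> prob_simplex \<Longrightarrow> (H_L L has_derivative blinfun_apply (H' p)) (at p within prob_simplex)"
    and H'': "(H' has_derivative H'' Q) (at Q within prob_simplex)"
    using twice Q unfolding twice_diff_on_simplex_def by blast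
  obtain K r where K: "0 \<le> K" "0 < r"
    and Lipschitz: "\<And>p. p \<in> prob_simplex \<Longrightarrow> norm (p - Q) < r \<Longrightarrow> norm (H' p - H' Q) \<le> K * norm (p - Q)"
    using has_derivative_imp_Lipschitz_at[OF H''] by blast
  obtain m where m: "0 < m" "\<And>y. Q $ y \<noteq> 0 \<Longrightarrow> m \<le> \<bar>Q $ y\<bar>"
    using nonzero_entries_bounded_away_from_zero by blast
  show thesis
  proof
    show "0 < min (sqrt m) r" using m K by simp
    fix \<beta> P aP
    assume \<beta>: "0 < \<beta>" "\<beta> < min (sqrt m) r" and P: "P \<in> prob_simplex"
      and aP: "bayes_action L P aP" and chi2: "chi2_div P Q \<le> ereal (\<beta>^2)"
    have close: "norm (P - Q) \<le> \<beta>"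
      using chi2_div_le_imp_norm_le[OF chi2 Q] \<beta> by simp
    have "\<beta>^2 \<le> (sqrt m)^2"
      using \<beta> by (intro power_mono) auto
    then have P': "Q - (P - Q) \<in> prob_simplex"
      using chi2_line_point_in_prob_simplex[OF chi2 P Q, of "-1"] m Q
      by (fastforce simp: prob_simplex_nonneg)
    then obtain a' where a': "bayes_action L (Q - (P - Q)) a'"
      using attained by blast
    have "L_div L P aP aQ \<le> 2 * H_L L Q - H_L L (Q + (P - Q)) - H_L L (Q - (P - Q))"
      using L_div_le_second_difference[OF aP aQ a'] by simp
    also have "\<dots> \<le> 2 * K * (norm (P - Q))^2"
    proof (rule abs_le_D1, rule second_difference_le[OF convex_prob_simplex Q _ P' H' _ K(1)])
      show "Q + (P - Q) \<in> prob_simplex" using P by simp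
      fix p assume "p \<in> prob_simplex" "norm (p - Q) \<le> norm (P - Q)"
      then show "norm (H' p - H' Q) \<le> K * norm (p - Q)"
        using close \<beta> by (intro Lipschitz) auto
    qed
    also have "\<dots> \<le> 2 * K * \<beta>^2"
      using close K(1) by (intro mult_left_mono power_mono) auto
    finally show "\<bar>L_div L P aP aQ\<bar> \<le> 2 * K * \<beta>^2"
      using L_div_nonneg[OF aP] by simp
  qed
qed

theorem lemma8p2:
  fixes L :: "'y::finite \<Rightarrow> 'a \<Rightarrow> real"
    and Q :: "real ^ 'y" and aQ :: 'a
  assumes attained: "\<forall>p\<in>prob_simplex. \<exists>a. bayes_action L p a"
    and Q: "Q \<in> prob_simplex"
    and aQ: "bayes_action L Q aQ"
  shows "(\<exists>C \<delta>. \<delta> > 0 \<and> (\<forall>\<beta>. 0 < \<beta> \<and> \<beta> < \<delta> \<longrightarrow>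
            (\<forall>P\<in>prob_simplex. \<forall>aP. bayes_action L P aP \<and> chi2_div P Q \<le> ereal (\<beta>^2)
               \<longrightarrow> \<bar>L_div L P aP aQ\<bar> \<le> C * \<beta>)))
       \<and> (twice_diff_on_simplex (H_L L) \<longrightarrow>
          (\<exists>C \<delta>. \<delta> > 0 \<and> (\<forall>\<beta>. 0 < \<beta> \<and> \<beta> < \<delta> \<longrightarrow>
            (\<forall>P\<in>prob_simplex. \<forall>aP. bayes_action L P aP \<and> chi2_div P Q \<le> ereal (\<beta>^2)
               \<longrightarrow> \<bar>L_div L P aP aQ\<bar> \<le> C * \<beta>^2))))"
  apply (intro conjI impI)
   apply (rule L_div_chi2_linear_bound[OF attained Q aQ], blast)
  apply (rule L_div_chi2_quadratic_bound[OF attained Q aQ], assumption, blast)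
  done

end
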